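(* There is an absolute constant $C$ such that the following holds. Let $n\ge 4$ be a power of $4$ and let $\mathcal{H}_1$ be as in the context. Let $1\le i<j\le n$, let $i$ lie in block $c_1$ and $j$ in block $c_2$ (possibly $c_1=c_2$), and let $r=\min(c_2-c_1,\ \sqrt{n}-(c_2-c_1))$. Then \[\sum_{d=0}^{\sqrt{n}-1}\mathbb{E}_{h\in\mathcal{H}_1}\left[h_{i+d\sqrt{n}}\,h_{j+d\sqrt{n}}\right]\ \le\ C\,\frac{\lg(r+2)}{(r+1)^2}.\]
   Context: $\lg$ is the base-2 logarithm. Let $n$ be a power of $4$, so $\sqrt{n}$ is an even integer; put $\ell=\sqrt{n}/2$. For $1\le c\le\sqrt n$, the $c$-th block is $\{(c-1)\sqrt n+1,\dots,c\sqrt n\}\subseteq[n]$. The random function $h:[n]\to\{-1,1\}$ drawn from $\mathcal{H}_1$ has mutually independent coordinates, with $\mathbb{P}[h_i=1]=\tfrac12+\tfrac{1}{2(\ell+1-c)}$ if $i$ lies in block $c\le \ell$, and $\mathbb{P}[h_i=1]=\tfrac12-\tfrac{1}{2(c-\ell)}$ if $i$ lies in block $c\ge \ell+1$ (so $\mathbb{E}h_i=\frac{1}{\ell+1-c}$, resp. $-\frac{1}{c-\ell}$). Indices are taken modulo $n$: $h_{i+n}=h_i$ for all integers $i$. *)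

theory Defs
  imports "HOL-Probability.Probability"
begin

(* sqrt n as a natural number (n is a power of 4, so this is exact) *)
definition isqrt :: "nat \<Rightarrow> nat" where
  "isqrt n = nat \<lfloor>sqrt (real n)\<rfloor>"

definition blk :: "nat \<Rightarrow> nat \<Rightarrow> nat" where
  "blk n i = (i - 1) div isqrt n + 1"

(* P[h_i = 1] for the distribution H_1 *)
definition prob_one :: "nat \<Rightarrow> nat \<Rightarrow> real" where
  "prob_one n i = (let l = real (isqrt n) / 2; c = real (blk n i) in
     if c \<le> l then 1/2 + 1 / (2 * (l + 1 - c)) else 1/2 - 1 / (2 * (c - l)))"

definition pm_one_pmf :: "real \<Rightarrow> real pmf" where
  "pm_one_pmf p = map_pmf (\<lambda>b. if b then 1 else -1) (bernoulli_pmf p)"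

(* H_1: independent coordinates on [n] = {1..n}; outside [n] the value is irrelevant (fixed to 0) *)
definition H1 :: "nat \<Rightarrow> (nat \<Rightarrow> real) pmf" where
  "H1 n = Pi_pmf {1..n} 0 (\<lambda>i. pm_one_pmf (prob_one n i))"

definition wrap :: "nat \<Rightarrow> nat \<Rightarrow> nat" where
  "wrap n k = (k - 1) mod n + 1"

end

theory Submission
  imports Defs "HOL-Analysis.Harmonic_Numbers"
begin

text \<open>
  Distinct positions are independent, so each expectation is a product of the two coordinate
  means, and these depend only on the blocks. Shifting both positions by \<open>d\<surd>n\<close> shifts their
  blocks cyclically, so the sum is the cyclic autocorrelation, at lag \<open>c\<^sub>2 - c\<^sub>1\<close>, of the block
  means \<open>1/\<ell>, \<dots>, 1/2, 1, -1, -1/2, \<dots>, -1/\<ell>\<close>. At lag \<open>r \<le> \<ell>\<close> the products of equal signs add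
  up to about \<open>2 H\<^sub>r / r\<close>, and those of opposite signs to \<open>-2 H\<^sub>r / (r + 1)\<close>; their difference is
  \<open>O(log r / r\<^sup>2)\<close>.
\<close>

lemma expectation_Pi_pmf_component:
  fixes p :: "'a \<Rightarrow> real pmf"
  assumes "finite A" "x \<in> A"
  shows "measure_pmf.expectation (Pi_pmf A dflt p) (\<lambda>h. h x) = measure_pmf.expectation (p x) (\<lambda>v. v)"
proof -
  have "measure_pmf.expectation (Pi_pmf A dflt p) (\<lambda>h. h x)
      = measure_pmf.expectation (map_pmf (\<lambda>h. h x) (Pi_pmf A dflt p)) (\<lambda>v. v)"
    by simp
  also have "\<dots> = measure_pmf.expectation (p x) (\<lambda>v. v)"
    using assms by (subst Pi_pmf_component) auto
  finally show ?thesis .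
qed

lemma expectation_Pi_pmf_mult_components:
  fixes p :: "'a \<Rightarrow> real pmf"
  assumes A: "finite A" "x \<in> A" "y \<in> A" "x \<noteq> y"
    and int: "integrable (p x) (\<lambda>v. v)" "integrable (p y) (\<lambda>v. v)"
  shows "measure_pmf.expectation (Pi_pmf A dflt p) (\<lambda>h. h x * h y)
       = measure_pmf.expectation (p x) (\<lambda>v. v) * measure_pmf.expectation (p y) (\<lambda>v. v)"
proof -
  let ?Q = "Pi_pmf A dflt p"
  have "prob_space.indep_vars (measure_pmf ?Q) (\<lambda>_. count_space UNIV) (\<lambda>z h. h z) {x, y}"
    using A by (intro prob_space.indep_vars_subset[OF measure_pmf.prob_space_axioms indep_vars_Pi_pmf]) auto
  then have indep: "prob_space.indep_vars (measure_pmf ?Q) (\<lambda>_. borel) (\<lambda>z h. h z) {x, y}"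
    by (rule prob_space.indep_vars_compose2[OF measure_pmf.prob_space_axioms _, where Y="\<lambda>_ v. v", simplified])
       simp
  have component_integrable: "integrable ?Q (\<lambda>h. h z)" if "z \<in> {x, y}" for z
  proof -
    have "integrable (p z) (\<lambda>v. v)" using that int by auto
    also have "p z = map_pmf (\<lambda>h. h z) ?Q" using that A by (subst Pi_pmf_component) auto
    finally show ?thesis by simp
  qed
  have "measure_pmf.expectation ?Q (\<lambda>h. \<Prod>z\<in>{x, y}. h z)
      = (\<Prod>z\<in>{x, y}. measure_pmf.expectation ?Q (\<lambda>h. h z))"
    by (rule prob_space.indep_vars_lebesgue_integral[OF measure_pmf.prob_space_axioms _ indep component_integrable])
       auto
  then show ?thesis using A by (simp add: expectation_Pi_pmf_component)
qed

lemma integrable_pm_one_pmf: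
  fixes f :: "real \<Rightarrow> 'b :: {banach, second_countable_topology}"
  shows "integrable (pm_one_pmf q) f"
  by (rule integrable_measure_pmf_finite, rule finite_subset[of _ "{1, -1}"]) (auto simp: pm_one_pmf_def)

lemma expectation_pm_one_pmf:
  assumes "0 \<le> q" "q \<le> 1"
  shows "measure_pmf.expectation (pm_one_pmf q) (\<lambda>v. v) = 2 * q - 1"
  using assms unfolding pm_one_pmf_def by simp

section \<open>The cyclic sequence of block means\<close>

definition block_mean :: "nat \<Rightarrow> nat \<Rightarrow> real" where
  "block_mean l c = (if c \<le> l then 1 / real (l + 1 - c) else - 1 / real (c - l))"

text \<open>The mean in block \<open>a mod 2\<ell> + 1\<close>: here blocks are counted from \<open>0\<close> and cyclically.\<close>
definition cyclic_mean :: "nat \<Rightarrow> nat \<Rightarrow> real" where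
  "cyclic_mean l a = block_mean l (a mod (2 * l) + 1)"

definition cyclic_correlation :: "nat \<Rightarrow> nat \<Rightarrow> real" where
  "cyclic_correlation l d = (\<Sum>a<2 * l. cyclic_mean l a * cyclic_mean l (a + d))"

lemma cyclic_mean_low: "a < l \<Longrightarrow> cyclic_mean l a = 1 / (real l - real a)"
  by (simp add: cyclic_mean_def block_mean_def of_nat_diff)

lemma cyclic_mean_high: "l \<le> a \<Longrightarrow> a < 2 * l \<Longrightarrow> cyclic_mean l a = - 1 / (real a + 1 - real l)"
  by (simp add: cyclic_mean_def block_mean_def of_nat_diff)

lemma cyclic_mean_periodic [simp]: "cyclic_mean l (a + 2 * l) = cyclic_mean l a"
  by (simp add: cyclic_mean_def)

lemma sum_periodic_shift:
  fixes F :: "nat \<Rightarrow> 'a :: comm_monoid_add"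
  assumes "\<And>a. F (a + s) = F a"
  shows "(\<Sum>i<s. F (c + i)) = (\<Sum>i<s. F i)"
proof (induction c)
  case (Suc c)
  show ?case
  proof (cases s)
    case (Suc m)
    have "(\<Sum>i<s. F (c + i)) = F c + (\<Sum>i<m. F (Suc c + i))"
      unfolding Suc by (subst sum.lessThan_Suc_shift) simp
    moreover have "(\<Sum>i<s. F (Suc c + i)) = (\<Sum>i<m. F (Suc c + i)) + F (c + s)"
      unfolding Suc by (simp add: add.commute add.left_commute)
    ultimately show ?thesis using Suc.IH assms[of c] by (simp add: add_ac)
  qed simp
qed simp

lemma cyclic_correlation_shift:
  "(\<Sum>i<2 * l. cyclic_mean l (c + i) * cyclic_mean l (c + i + d)) = cyclic_correlation l d"
  unfolding cyclic_correlation_def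
  by (rule sum_periodic_shift[where F="\<lambda>a. cyclic_mean l a * cyclic_mean l (a + d)"])
     (metis add.commute add.left_commute cyclic_mean_periodic)

lemma cyclic_correlation_reflect:
  assumes "d \<le> 2 * l"
  shows "cyclic_correlation l d = cyclic_correlation l (2 * l - d)"
proof -
  have "cyclic_mean l (d + a + (2 * l - d)) = cyclic_mean l a" for a
    using assms by (metis add.commute add.left_commute cyclic_mean_periodic le_add_diff_inverse)
  then have "cyclic_correlation l (2 * l - d) = (\<Sum>a<2 * l. cyclic_mean l (d + a) * cyclic_mean l a)"
    using cyclic_correlation_shift[of l d "2 * l - d"] by simp
  then show ?thesis by (simp add: cyclic_correlation_def mult.commute add.commute)
qed

section \<open>Harmonic sums\<close>

definition harmonic_pair_sum :: "nat \<Rightarrow> nat \<Rightarrow> real" where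
  "harmonic_pair_sum d N = (\<Sum>j<N. 1 / ((real j + 1) * (real j + 1 + real d)))"

lemma harmonic_pair_sum_telescope:
  "real d * harmonic_pair_sum d N = harm N + harm d - harm (N + d)"
proof (induction N)
  case 0
  then show ?case by (simp add: harmonic_pair_sum_def harm_def)
next
  case (Suc N)
  have "real d * harmonic_pair_sum d (Suc N)
      = real d * harmonic_pair_sum d N + real d / ((real N + 1) * (real N + 1 + real d))"
    by (simp add: harmonic_pair_sum_def algebra_simps)
  also have "real d / ((real N + 1) * (real N + 1 + real d)) = 1 / (real N + 1) - 1 / (real N + 1 + real d)"
    by (simp add: field_simps)
  finally show ?case using Suc by (simp add: harm_Suc inverse_eq_divide algebra_simps)
qed

lemma harmonic_pair_sum_le:
  assumes "d \<ge> 1"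
  shows "harmonic_pair_sum d N \<le> harm d / real d"
proof -
  have "harm N \<le> (harm (N + d) :: real)" by (rule harm_mono) simp
  then have "real d * harmonic_pair_sum d N \<le> harm d" using harmonic_pair_sum_telescope[of d N] by simp
  then show ?thesis using assms by (simp add: field_simps)
qed

lemma harmonic_pair_sum_zero_le: "harmonic_pair_sum 0 N \<le> 2"
proof -
  have "harmonic_pair_sum 0 N \<le> 2 * harmonic_pair_sum 1 N"
    unfolding harmonic_pair_sum_def sum_distrib_left
    by (intro sum_mono) (simp add: divide_simps algebra_simps)
  also have "\<dots> \<le> 2" using harmonic_pair_sum_le[of 1 N] by (simp add: harm_def)
  finally show ?thesis .
qed

lemma sum_inverse_mult_reflected:
  "(\<Sum>i<d. 1 / ((real i + 1) * (real d - real i))) = 2 * harm d / (real d + 1)"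
proof -
  have "(\<Sum>i<d. 1 / ((real i + 1) * (real d - real i)))
      = (\<Sum>i<d. 1 / (real d + 1) * (1 / (real i + 1) + 1 / (real d - real i)))"
    by (intro sum.cong refl) (auto simp: field_simps)
  also have "\<dots> = 1 / (real d + 1) * ((\<Sum>i<d. 1 / (real i + 1)) + (\<Sum>i<d. 1 / (real d - real i)))"
    by (simp only: sum_distrib_left[symmetric] sum.distrib)
  also have "(\<Sum>i<d. 1 / (real d - real i)) = (\<Sum>i<d. 1 / (real i + 1))"
  proof -
    have "(\<Sum>i<d. 1 / (real d - real i)) = (\<Sum>i<d. (\<lambda>j. 1 / (real j + 1)) (d - Suc i))"
      by (intro sum.cong refl) (auto simp: of_nat_diff)
    also have "\<dots> = (\<Sum>i<d. 1 / (real i + 1))" by (rule sum.nat_diff_reindex)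
    finally show ?thesis .
  qed
  also have "(\<Sum>i<d. 1 / (real i + 1)) = harm d"
    by (simp add: harm_altdef inverse_eq_divide add.commute)
  finally show ?thesis by simp
qed

lemma harm_le_log: "harm d \<le> 2 * log 2 (real d + 2)"
proof (cases "d = 0")
  case True
  then show ?thesis by (simp add: harm_def)
next
  case False
  have "harm d - ln (real d) \<le> harm 1 - ln (real (1::nat))"
    using False by (intro euler_mascheroni_sequence_decreasing) auto
  then have "harm d \<le> 1 + ln (real d)" by (simp add: harm_def)
  moreover have "ln (real d) \<le> ln (real d + 2)" using False by simp
  moreover have "ln (real d + 2) \<le> log 2 (real d + 2)"
  proof -
    have "ln 2 \<le> (1::real)" using ln_le_minus_one[of 2] by simp
    then show ?thesis unfolding log_def by (simp add: field_simps mult_left_le)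
  qed
  moreover have "1 \<le> log 2 (real d + 2)" by simp
  ultimately show ?thesis by linarith
qed

section \<open>The four quarters of the correlation sum\<close>

text \<open>For \<open>d \<le> \<ell>\<close>, \<open>a\<close> and \<open>a + d\<close> lie in the same half in the first and third quarters,
  in different halves in the second quarter, and \<open>a + d\<close> wraps around in the fourth.\<close>

lemma cyclic_correlation_low_quarter:
  assumes "d \<le> l"
  shows "(\<Sum>a\<in>{0..<l - d}. cyclic_mean l a * cyclic_mean l (a + d)) = harmonic_pair_sum d (l - d)"
proof -
  have "(\<Sum>a\<in>{0..<l - d}. cyclic_mean l a * cyclic_mean l (a + d))
      = (\<Sum>i\<in>{0..<l - d}. cyclic_mean l (l - d + 0 - Suc i) * cyclic_mean l (l - d + 0 - Suc i + d))"
    by (rule sum.atLeastLessThan_rev)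
  also have "\<dots> = harmonic_pair_sum d (l - d)"
    unfolding harmonic_pair_sum_def atLeast0LessThan
    by (intro sum.cong refl) (auto simp: cyclic_mean_low of_nat_diff field_simps)
  finally show ?thesis .
qed

lemma cyclic_correlation_high_quarter:
  assumes "d \<le> l"
  shows "(\<Sum>a\<in>{l..<2 * l - d}. cyclic_mean l a * cyclic_mean l (a + d)) = harmonic_pair_sum d (l - d)"
proof -
  have "{l..<2 * l - d} = {0 + l..<(l - d) + l}" using assms by (simp add: mult_2)
  then have "(\<Sum>a\<in>{l..<2 * l - d}. cyclic_mean l a * cyclic_mean l (a + d))
      = (\<Sum>i\<in>{0..<l - d}. cyclic_mean l (i + l) * cyclic_mean l (i + l + d))"
    by (simp only: sum.shift_bounds_nat_ivl)
  also have "\<dots> = harmonic_pair_sum d (l - d)"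
    unfolding harmonic_pair_sum_def atLeast0LessThan
    by (intro sum.cong refl) (auto simp: cyclic_mean_high of_nat_diff field_simps)
  finally show ?thesis .
qed

lemma cyclic_correlation_crossing_quarter:
  assumes "d \<le> l"
  shows "(\<Sum>a\<in>{l - d..<l}. cyclic_mean l a * cyclic_mean l (a + d)) = - (2 * harm d / (real d + 1))"
proof -
  have "{l - d..<l} = {0 + (l - d)..<d + (l - d)}" using assms by simp
  then have "(\<Sum>a\<in>{l - d..<l}. cyclic_mean l a * cyclic_mean l (a + d))
      = (\<Sum>i\<in>{0..<d}. cyclic_mean l (i + (l - d)) * cyclic_mean l (i + (l - d) + d))"
    by (simp only: sum.shift_bounds_nat_ivl)
  also have "\<dots> = (\<Sum>i<d. - (1 / ((real i + 1) * (real d - real i))))"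
    unfolding atLeast0LessThan using assms
    by (intro sum.cong refl) (auto simp: cyclic_mean_low cyclic_mean_high of_nat_diff field_simps)
  also have "\<dots> = - (2 * harm d / (real d + 1))"
    by (simp add: sum_negf sum_inverse_mult_reflected)
  finally show ?thesis .
qed

lemma cyclic_correlation_wrapping_quarter:
  assumes "d \<le> l"
  shows "(\<Sum>a\<in>{2 * l - d..<2 * l}. cyclic_mean l a * cyclic_mean l (a + d)) \<le> 0"
proof (rule sum_nonpos)
  fix a assume a: "a \<in> {2 * l - d..<2 * l}"
  then have "l \<le> a" "a < 2 * l" using assms by auto
  then have "cyclic_mean l a \<le> 0" by (simp add: cyclic_mean_high)
  moreover have "cyclic_mean l (a + d) \<ge> 0"
  proof -
    have "a + d = (a + d - 2 * l) + 2 * l" "a + d - 2 * l < l" using a assms by auto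
    then show ?thesis by (metis cyclic_mean_periodic cyclic_mean_low of_nat_less_iff diff_gt_0_iff_gt
        divide_nonneg_pos zero_le_one less_imp_le)
  qed
  ultimately show "cyclic_mean l a * cyclic_mean l (a + d) \<le> 0" by (simp add: mult_nonpos_nonneg)
qed

lemma cyclic_correlation_le:
  assumes "d \<le> l"
  shows "cyclic_correlation l d \<le> 2 * harmonic_pair_sum d (l - d) - 2 * harm d / (real d + 1)"
proof -
  have "cyclic_correlation l d
      = (\<Sum>a\<in>{0..<l - d}. cyclic_mean l a * cyclic_mean l (a + d))
      + (\<Sum>a\<in>{l - d..<l}. cyclic_mean l a * cyclic_mean l (a + d))
      + (\<Sum>a\<in>{l..<2 * l - d}. cyclic_mean l a * cyclic_mean l (a + d))
      + (\<Sum>a\<in>{2 * l - d..<2 * l}. cyclic_mean l a * cyclic_mean l (a + d))"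
    unfolding cyclic_correlation_def using assms
    by (simp add: sum.atLeastLessThan_concat atLeast0LessThan[symmetric])
  then show ?thesis
    using cyclic_correlation_low_quarter[OF assms] cyclic_correlation_crossing_quarter[OF assms]
      cyclic_correlation_high_quarter[OF assms] cyclic_correlation_wrapping_quarter[OF assms]
    by linarith
qed

lemma cyclic_correlation_bound:
  assumes "d \<le> l"
  shows "cyclic_correlation l d \<le> 8 * log 2 (real d + 2) / (real d + 1) ^ 2"
proof (cases "d = 0")
  case True
  then show ?thesis
    using cyclic_correlation_le[OF assms] harmonic_pair_sum_zero_le[of l] by (simp add: harm_def)
next
  case False
  have "cyclic_correlation l d \<le> 2 * harm d / real d - 2 * harm d / (real d + 1)"
    using cyclic_correlation_le[OF assms] harmonic_pair_sum_le[of d "l - d"] False by simp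
  also have "\<dots> = 2 * harm d / (real d * (real d + 1))"
    using False by (simp add: field_simps)
  also have "\<dots> \<le> 4 * harm d / (real d + 1) ^ 2"
  proof -
    have "(real d + 1) * (real d + 1) \<le> (2 * real d) * (real d + 1)"
      using False by (intro mult_right_mono) auto
    then show ?thesis using False harm_nonneg[of d]
      by (simp add: divide_simps power2_eq_square mult_left_mono algebra_simps)
  qed
  also have "\<dots> \<le> 8 * log 2 (real d + 2) / (real d + 1) ^ 2"
    using harm_le_log[of d] by (simp add: divide_right_mono)
  finally show ?thesis .
qed

lemma cyclic_correlation_bound_min_lag:
  assumes "d \<le> 2 * l"
  defines "r \<equiv> min d (2 * l - d)"
  shows "cyclic_correlation l d \<le> 8 * log 2 (real r + 2) / (real r + 1) ^ 2"
proof (cases "d \<le> l")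
  case True
  then show ?thesis using cyclic_correlation_bound unfolding r_def by simp
next
  case False
  then show ?thesis
    using cyclic_correlation_bound[of "2 * l - d" l] cyclic_correlation_reflect[OF assms(1)]
    unfolding r_def by simp
qed

lemma isqrt_power_four: "isqrt (4 ^ k) = 2 ^ k"
proof -
  have "real (4 ^ k) = (2 ^ k)\<^sup>2" by (simp add: power_even_eq[symmetric] power_mult)
  then show ?thesis unfolding isqrt_def by simp
qed

lemma
  assumes "isqrt n = 2 * l"
  shows prob_one_nonneg: "0 \<le> prob_one n z"
    and prob_one_le_one: "prob_one n z \<le> 1"
    and mean_prob_one: "2 * prob_one n z - 1 = block_mean l (blk n z)"
proof -
  have half: "real (isqrt n) / 2 = real l" using assms by simp
  have "blk n z \<ge> 1" by (simp add: blk_def)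
  then have "0 \<le> prob_one n z \<and> prob_one n z \<le> 1 \<and> 2 * prob_one n z - 1 = block_mean l (blk n z)"
    unfolding prob_one_def half Let_def block_mean_def
    by (cases "blk n z \<le> l") (auto simp: of_nat_diff field_simps)
  then show "0 \<le> prob_one n z" "prob_one n z \<le> 1" "2 * prob_one n z - 1 = block_mean l (blk n z)"
    by auto
qed

lemma wrap_mem: "0 < n \<Longrightarrow> wrap n k \<in> {1..n}"
  by (simp add: wrap_def Suc_le_eq)

lemma wrap_inj:
  assumes "1 \<le> i" "i < j" "j \<le> n"
  shows "wrap n (i + e) \<noteq> wrap n (j + e)"
proof
  assume "wrap n (i + e) = wrap n (j + e)"
  then have "(j + e - 1) mod n = (i + e - 1) mod n" unfolding wrap_def by simp
  then have "n dvd (j + e - 1) - (i + e - 1)" using assms by (subst (asm) mod_eq_dvd_iff_nat) auto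
  moreover have "(j + e - 1) - (i + e - 1) = j - i" "0 < j - i" "j - i < n" using assms by auto
  ultimately show False using nat_dvd_not_less by metis
qed

lemma blk_wrap_shift:
  assumes "isqrt n = s" "n = s * s" "0 < s" "1 \<le> i"
  shows "blk n (wrap n (i + d * s)) = ((i - 1) div s + d) mod s + 1"
proof -
  have "wrap n (i + d * s) = (i - 1 + d * s) mod n + 1"
    unfolding wrap_def using assms by (simp add: algebra_simps)
  moreover have "(i - 1 + d * s) mod n = s * ((i - 1 + d * s) div s mod s) + (i - 1 + d * s) mod s"
    unfolding assms(2) by (rule mod_mult2_eq)
  then have "(i - 1 + d * s) mod n div s = (i - 1 + d * s) div s mod s"
    using assms(3) by simp
  moreover have "(i - 1 + d * s) div s = (i - 1) div s + d" using assms(3) by simp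
  ultimately show ?thesis unfolding blk_def assms(1) by simp
qed

lemma H1_shifted_correlation:
  assumes "isqrt n = 2 * l" "n = (2 * l) * (2 * l)" "0 < l" "1 \<le> i" "i < j" "j \<le> n"
  shows "measure_pmf.expectation (H1 n) (\<lambda>h. h (wrap n (i + d * (2 * l))) * h (wrap n (j + d * (2 * l))))
       = cyclic_mean l ((i - 1) div (2 * l) + d) * cyclic_mean l ((j - 1) div (2 * l) + d)"
proof -
  have mean: "measure_pmf.expectation (pm_one_pmf (prob_one n (wrap n (k + d * (2 * l))))) (\<lambda>v. v)
      = cyclic_mean l ((k - 1) div (2 * l) + d)" if "1 \<le> k" for k
    using that assms(1-3)
    by (simp add: expectation_pm_one_pmf prob_one_nonneg prob_one_le_one mean_prob_one blk_wrap_shift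
        cyclic_mean_def)
  have "0 < n" using assms by simp
  then have positions: "wrap n (i + d * (2 * l)) \<in> {1..n}" "wrap n (j + d * (2 * l)) \<in> {1..n}"
    "wrap n (i + d * (2 * l)) \<noteq> wrap n (j + d * (2 * l))"
    using wrap_mem wrap_inj[OF assms(4-6)] by blast+
  have "1 \<le> j" using assms(4,5) by simp
  then show ?thesis unfolding H1_def
    by (subst expectation_Pi_pmf_mult_components[OF _ positions])
       (simp_all add: integrable_pm_one_pmf mean[OF assms(4)] mean[OF \<open>1 \<le> j\<close>])
qed

theorem lemma2p1:
  "\<exists>C::real. \<forall>n k i j. n = 4 ^ k \<longrightarrow> k \<ge> 1 \<longrightarrow> 1 \<le> i \<longrightarrow> i < j \<longrightarrow> j \<le> n \<longrightarrow>
     (let s = isqrt n; c1 = blk n i; c2 = blk n j; r = min (c2 - c1) (s - (c2 - c1)) in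
      (\<Sum>d = 0..s - 1. measure_pmf.expectation (H1 n)
          (\<lambda>h. h (wrap n (i + d * s)) * h (wrap n (j + d * s))))
        \<le> C * log 2 (real r + 2) / (real r + 1) ^ 2)"
proof (intro exI[of _ 8] allI impI, goal_cases)
  case (1 n k i j)
  then have ij: "1 \<le> i" "i < j" "j \<le> n" by simp_all
  define l where "l = (2::nat) ^ (k - 1)"
  have l: "0 < l" "isqrt n = 2 * l" "n = (2 * l) * (2 * l)"
    using 1 by (simp_all add: l_def isqrt_power_four power_mult_distrib[symmetric] power_Suc[symmetric])
  define c1 c2 where "c1 = (i - 1) div (2 * l)" and "c2 = (j - 1) div (2 * l)"
  have "c1 \<le> c2" "c2 < 2 * l"
    using ij l by (auto simp: c1_def c2_def div_le_mono less_mult_imp_div_less)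
  then have sum: "(\<Sum>d = 0..2 * l - 1. measure_pmf.expectation (H1 n)
      (\<lambda>h. h (wrap n (i + d * (2 * l))) * h (wrap n (j + d * (2 * l))))) = cyclic_correlation l (c2 - c1)"
    using l ij cyclic_correlation_shift[of l c1 "c2 - c1", symmetric]
    by (simp add: H1_shifted_correlation atLeast0AtMost lessThan_Suc_atMost[symmetric] c1_def c2_def add_ac)
  show ?case
    using cyclic_correlation_bound_min_lag[of "c2 - c1" l] \<open>c1 \<le> c2\<close> \<open>c2 < 2 * l\<close>
    unfolding Let_def l(2) sum by (simp add: blk_def l(2) c1_def c2_def)
qed

end
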